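(* For every information structure $\mathbf q$ (with $\mathbb E[\mathbf q]=p_0$), the following three conditions are equivalent: (i) $\mathrm{VoI}_A(\mathbf q)=0$; (ii) there exists $a^\star\in A^\star(p_0)$ such that $a^\star\in A^\star(\mathbf q)$ $\mathbb P$-almost surely; (iii) $\mathbf q\in \Delta^{c}_A(p_0)$ $\mathbb P$-almost surely.
   Context: Let $K$ be a finite set of states of nature. Signed measures on $K$ are identified with $\mathbb R^K$, with scalar product $\langle s,v\rangle=\sum_{k\in K}s_kv_k$ and Euclidean norm $\|\cdot\|$. Let $\Delta\subset\mathbb R^K$ be the simplex of probability distributions on $K$, and fix a prior $p_0\in\Delta$ with full support. The action set $A\subset\mathbb R^K$ is the closed convex hull $\overline{\mathrm{co}}\{(g(d,k))_{k\in K}: d\in D\}$ for a compact set $D$ and a continuous $g:D\times K\to\mathbb R$; in particular $A$ is a nonempty compact convex subset of $\mathbb R^K$. The value function is $v_A(p)=\max_{a\in A}\langle p,a\rangle$ for $p\in\Delta$. For $p\in\Delta$, the set of optimal actions is $A^\star(p)=\{a\in A:\langle p,a'\rangle\le\langle p,a\rangle\ \forall a'\in A\}$. For $a\in A$, the set of beliefs revealed by $a$ is $\Delta^\star_A(a)=\{p\in\Delta:\langle p,a'\rangle\le\langle p,a\rangle\ \forall a'\in A\}$. The confidence set of $p_0$ is $\Delta^c_A(p_0)=\bigcap_{a\in A^\star(p_0)}\Delta^\star_A(a)$. An information structure is a random variable $\mathbf q$ defined on a probability space $(\Omega,\mathcal F,\mathbb P)$ with values in $\Delta$ such that $\mathbb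 E[\mathbf q]=p_0$. The value of information is $\mathrm{VoI}_A(\mathbf q)=\mathbb E[v_A(\mathbf q)]-v_A(p_0)$. *)

theory Defs
  imports "HOL-Analysis.Analysis" "HOL-Probability.Probability"
begin

text \<open>Signed measures on the finite state space K are vectors in real^'k;
  the scalar product is the inner product (sum over k of s_k v_k).\<close>

definition prob_simplex :: "(real^'k::finite) set" where
  "prob_simplex = {p. (\<forall>k. 0 \<le> p $ k) \<and> (\<Sum>k\<in>UNIV. p $ k) = 1}"

definition action_set :: "'d::topological_space set \<Rightarrow> ('d \<Rightarrow> 'k::finite \<Rightarrow> real) \<Rightarrow> (real^'k) set" where
  "action_set D g = closure (convex hull ((\<lambda>d. \<chi> k. g d k) ` D))"

definition vA :: "(real^'k::finite) set \<Rightarrow> real^'k \<Rightarrow> real" where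
  "vA A p = (SUP a\<in>A. p \<bullet> a)"

definition Astar :: "(real^'k::finite) set \<Rightarrow> real^'k \<Rightarrow> (real^'k) set" where
  "Astar A p = {a\<in>A. \<forall>a'\<in>A. p \<bullet> a' \<le> p \<bullet> a}"

definition Deltastar :: "(real^'k::finite) set \<Rightarrow> real^'k \<Rightarrow> (real^'k) set" where
  "Deltastar A a = {p\<in>prob_simplex. \<forall>a'\<in>A. p \<bullet> a' \<le> p \<bullet> a}"

definition Deltac :: "(real^'k::finite) set \<Rightarrow> real^'k \<Rightarrow> (real^'k) set" where
  "Deltac A p0 = (\<Inter>a\<in>Astar A p0. Deltastar A a)"

definition info_structure :: "'w measure \<Rightarrow> ('w \<Rightarrow> real^'k::finite) \<Rightarrow> real^'k \<Rightarrow> bool" where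
  "info_structure M q p0 \<longleftrightarrow> prob_space M \<and> (\<forall>\<omega>\<in>space M. q \<omega> \<in> prob_simplex)
     \<and> (\<forall>k. (\<lambda>\<omega>. q \<omega> $ k) \<in> borel_measurable M)
     \<and> (\<forall>k. (\<integral>\<omega>. q \<omega> $ k \<partial>M) = p0 $ k)"

definition VoI :: "(real^'k::finite) set \<Rightarrow> 'w measure \<Rightarrow> ('w \<Rightarrow> real^'k) \<Rightarrow> real^'k \<Rightarrow> real" where
  "VoI A M q p0 = (\<integral>\<omega>. vA A (q \<omega>) \<partial>M) - vA A p0"

end

theory Submission
  imports Defs
begin

text \<open>Fix an optimal action \<open>a\<close> at the prior. Since \<open>\<bbbE>[\<langle>q, a\<rangle>] = \<langle>p0, a\<rangle> = v(p0)\<close>, the value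
  of information is the expectation of the nonnegative gap \<open>v(q) - \<langle>q, a\<rangle>\<close>, so it vanishes iff
  \<open>a\<close> stays optimal at almost every posterior. Once one optimal action survives almost surely,
  every one does; to make this a single almost-sure event, use a countable dense subset of the
  optimal actions at \<open>p0\<close> and the closedness of the sets of optimal actions.\<close>

lemma compact_action_set:
  assumes "compact D" "\<And>k. continuous_on D (\<lambda>d. g d k)"
  shows "compact (action_set D g)"
proof -
  have "continuous_on D (\<lambda>d. \<chi> k. g d k)"
    using assms(2) by (intro continuous_on_vec_lambda) auto
  then have "compact (convex hull ((\<lambda>d. \<chi> k. g d k) ` D))"
    using assms(1) by (intro compact_convex_hull compact_continuous_image)
  then show ?thesis
    unfolding action_set_def by (simp add: closure_closed compact_imp_closed)
qed

lemma action_set_nonempty: "D \<noteq> {} \<Longrightarrow> action_set D g \<noteq> {}"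
  unfolding action_set_def by simp

lemma Astar_nonempty:
  assumes "compact A" "A \<noteq> {}"
  shows "Astar A p \<noteq> {}"
proof -
  have "continuous_on A (\<lambda>a. p \<bullet> a)"
    by (intro continuous_intros)
  then obtain a where "a \<in> A" "\<forall>a'\<in>A. p \<bullet> a' \<le> p \<bullet> a"
    using continuous_attains_sup[OF assms] by metis
  then show ?thesis unfolding Astar_def by blast
qed

lemma closed_Astar: "closed A \<Longrightarrow> closed (Astar A p)"
proof -
  assume "closed A"
  moreover have "Astar A p = A \<inter> (\<Inter>a'\<in>A. {a. p \<bullet> a' \<le> p \<bullet> a})"
    unfolding Astar_def by auto
  ultimately show ?thesis
    by (auto intro: closed_INT closed_halfspace_ge)
qed

lemma vA_eq_inner_Astar: "a \<in> Astar A p \<Longrightarrow> vA A p = p \<bullet> a"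
  unfolding vA_def Astar_def by (rule cSup_eq_maximum) auto

lemma inner_le_vA:
  assumes "compact A" "a \<in> A"
  shows "p \<bullet> a \<le> vA A p"
proof -
  obtain b where "b \<in> Astar A p"
    using Astar_nonempty[OF assms(1)] assms(2) by blast
  with assms(2) show ?thesis
    unfolding vA_eq_inner_Astar[OF \<open>b \<in> Astar A p\<close>] by (auto simp: Astar_def)
qed

lemma mem_Astar_iff_vA:
  assumes "compact A" "a \<in> A"
  shows "a \<in> Astar A p \<longleftrightarrow> vA A p = p \<bullet> a"
proof
  assume "vA A p = p \<bullet> a"
  then show "a \<in> Astar A p"
    using assms(2) inner_le_vA[OF assms(1), of _ p] unfolding Astar_def by auto
qed (rule vA_eq_inner_Astar)

lemma vA_zero: "A \<noteq> {} \<Longrightarrow> vA A 0 = 0"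
  unfolding vA_def by simp

lemma lipschitz_on_vA:
  assumes "compact A" "\<forall>a\<in>A. norm a \<le> B" "0 \<le> B"
  shows "B-lipschitz_on UNIV (vA A)"
proof (rule lipschitz_onI)
  have one_sided: "vA A p - vA A p' \<le> B * dist p p'" for p p'
  proof (cases "A = {}")
    case False
    then obtain b where b: "b \<in> Astar A p"
      using Astar_nonempty[OF assms(1)] by blast
    then have "b \<in> A" by (simp add: Astar_def)
    have "vA A p = p' \<bullet> b + (p - p') \<bullet> b"
      using vA_eq_inner_Astar[OF b] by (simp add: inner_diff_left)
    also have "\<dots> \<le> vA A p' + norm (p - p') * norm b"
      using inner_le_vA[OF assms(1) \<open>b \<in> A\<close>, of p'] Cauchy_Schwarz_ineq2[of "p - p'" b]
      by linarith
    also have "\<dots> \<le> vA A p' + B * dist p p'"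
      using assms(2) \<open>b \<in> A\<close> by (simp add: dist_norm mult.commute mult_right_mono)
    finally show ?thesis by simp
  qed (simp add: vA_def assms(3))
  show "dist (vA A p) (vA A p') \<le> B * dist p p'" for p p'
    using one_sided[of p p'] one_sided[of p' p]
    by (simp add: dist_real_def dist_commute)
qed (use assms in auto)

lemma norm_le_1_prob_simplex:
  assumes "p \<in> prob_simplex"
  shows "norm p \<le> 1"
proof -
  have "norm p \<le> (\<Sum>k\<in>UNIV. \<bar>p $ k\<bar>)" by (rule norm_le_l1_cart)
  also have "\<dots> = 1" using assms by (simp add: prob_simplex_def)
  finally show ?thesis .
qed

lemma mem_Deltac_iff:
  assumes "p \<in> prob_simplex"
  shows "p \<in> Deltac A p0 \<longleftrightarrow> Astar A p0 \<subseteq> Astar A p"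
  using assms unfolding Deltac_def Deltastar_def Astar_def by blast

lemma borel_measurable_cartI:
  fixes f :: "'a \<Rightarrow> real^'k"
  assumes "\<And>k. (\<lambda>x. f x $ k) \<in> borel_measurable M"
  shows "f \<in> borel_measurable M"
proof (rule borel_measurable_euclidean_space[THEN iffD2], rule ballI)
  fix i :: "real^'k" assume "i \<in> Basis"
  then obtain k where "i = axis k 1"
    by (auto simp: Basis_vec_def Basis_real_def)
  then show "(\<lambda>x. f x \<bullet> i) \<in> borel_measurable M"
    using assms[of k] by (simp add: inner_axis)
qed

lemma AE_subset_closed:
  fixes S :: "'a::{metric_space, second_countable_topology} set"
  assumes "\<And>\<omega>. closed (C \<omega>)" and "\<forall>a\<in>S. AE \<omega> in M. a \<in> C \<omega>"
  shows "AE \<omega> in M. S \<subseteq> C \<omega>"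
proof -
  obtain T where "countable T" "T \<subseteq> S" "S \<subseteq> closure T"
    using separable by blast
  with assms(2) have "AE \<omega> in M. \<forall>a\<in>T. a \<in> C \<omega>"
    by (subst AE_ball_countable) auto
  then show ?thesis
  proof eventually_elim
    case (elim \<omega>)
    then show ?case
      using \<open>S \<subseteq> closure T\<close> closure_minimal[OF _ assms(1)] by blast
  qed
qed

context
  fixes M :: "'w measure" and q :: "'w \<Rightarrow> real^'k::finite" and p0 :: "real^'k"
  assumes info: "info_structure M q p0"
begin

interpretation prob_space M
  using info by (simp add: info_structure_def)

lemma info_structure_norm_le_1: "\<omega> \<in> space M \<Longrightarrow> norm (q \<omega>) \<le> 1"
  using info by (auto simp: info_structure_def intro: norm_le_1_prob_simplex)

lemma info_structure_integrable_component: "integrable M (\<lambda>\<omega>. q \<omega> $ k)"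
proof (rule integrable_const_bound[where B=1])
  show "AE \<omega> in M. norm (q \<omega> $ k) \<le> 1"
  proof (rule AE_I2)
    fix \<omega> assume "\<omega> \<in> space M"
    then show "norm (q \<omega> $ k) \<le> 1"
      using info_structure_norm_le_1 component_le_norm_cart[of "q \<omega>" k] by fastforce
  qed
qed (use info in \<open>simp add: info_structure_def\<close>)

lemma info_structure_integral_inner:
  "integrable M (\<lambda>\<omega>. q \<omega> \<bullet> a) \<and> (\<integral>\<omega>. q \<omega> \<bullet> a \<partial>M) = p0 \<bullet> a"
  using info info_structure_integrable_component
  by (simp add: inner_vec_def info_structure_def Bochner_Integration.integral_sum)

lemma info_structure_integrable_vA:
  assumes "compact A"
  shows "integrable M (\<lambda>\<omega>. vA A (q \<omega>))"
proof (cases "A = {}")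
  case True
  then show ?thesis by (simp add: vA_def)
next
  case False
  obtain B where B: "\<forall>a\<in>A. norm a \<le> B" "0 \<le> B"
    using compact_imp_bounded[OF assms] by (auto simp: bounded_pos less_imp_le)
  note lip = lipschitz_on_vA[OF assms B]
  have "q \<in> borel_measurable M"
    using info by (intro borel_measurable_cartI) (simp add: info_structure_def)
  then have "(\<lambda>\<omega>. vA A (q \<omega>)) \<in> borel_measurable M"
    using borel_measurable_continuous_onI[OF lipschitz_on_continuous_on[OF lip]]
    by (rule measurable_compose)
  moreover have "norm (vA A (q \<omega>)) \<le> B" if "\<omega> \<in> space M" for \<omega>
  proof -
    have "norm (vA A (q \<omega>)) \<le> B * norm (q \<omega>)"
      using lipschitz_onD[OF lip, of "q \<omega>" 0] vA_zero[OF False] by (simp add: dist_norm)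
    also have "\<dots> \<le> B"
      using info_structure_norm_le_1[OF that] B(2) by (rule mult_left_le)
    finally show ?thesis .
  qed
  ultimately show ?thesis
    by (intro integrable_const_bound[where B=B] AE_I2)
qed

lemma VoI_eq_0_iff_AE_Astar:
  assumes "compact A" and a: "a \<in> Astar A p0"
  shows "VoI A M q p0 = 0 \<longleftrightarrow> (AE \<omega> in M. a \<in> Astar A (q \<omega>))"
proof -
  have "a \<in> A" using a by (simp add: Astar_def)
  let ?gap = "\<lambda>\<omega>. vA A (q \<omega>) - q \<omega> \<bullet> a"
  have gap_integrable: "integrable M ?gap"
    using info_structure_integrable_vA[OF assms(1)] info_structure_integral_inner by auto
  have "VoI A M q p0 = (\<integral>\<omega>. ?gap \<omega> \<partial>M)"
    using info_structure_integrable_vA[OF assms(1)] info_structure_integral_inner[of a]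
    by (simp add: VoI_def vA_eq_inner_Astar[OF a] Bochner_Integration.integral_diff)
  moreover have "AE \<omega> in M. 0 \<le> ?gap \<omega>"
    using inner_le_vA[OF assms(1) \<open>a \<in> A\<close>] by simp
  ultimately have "VoI A M q p0 = 0 \<longleftrightarrow> (AE \<omega> in M. ?gap \<omega> = 0)"
    using integral_nonneg_eq_0_iff_AE[OF gap_integrable] by simp
  then show ?thesis
    by (simp add: mem_Astar_iff_vA[OF assms(1) \<open>a \<in> A\<close>])
qed

end

theorem proposition3p1:
  fixes D :: "'d::topological_space set" and g :: "'d \<Rightarrow> 'k::finite \<Rightarrow> real"
    and p0 :: "real^'k" and M :: "'w measure" and q :: "'w \<Rightarrow> real^'k"
  assumes "compact D" and "D \<noteq> {}"
    and "\<And>k. continuous_on D (\<lambda>d. g d k)"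
    and "p0 \<in> prob_simplex" and "\<And>k. p0 $ k > 0"
    and "info_structure M q p0"
  defines "A \<equiv> action_set D g"
  shows "(VoI A M q p0 = 0 \<longleftrightarrow> (\<exists>a\<in>Astar A p0. AE \<omega> in M. a \<in> Astar A (q \<omega>)))
       \<and> ((\<exists>a\<in>Astar A p0. AE \<omega> in M. a \<in> Astar A (q \<omega>)) \<longleftrightarrow> (AE \<omega> in M. q \<omega> \<in> Deltac A p0))"
proof -
  have "compact A" unfolding A_def using assms(1,3) by (rule compact_action_set)
  moreover have "A \<noteq> {}" unfolding A_def using assms(2) by (rule action_set_nonempty)
  ultimately obtain a0 where a0: "a0 \<in> Astar A p0" using Astar_nonempty by blast
  note VoI_iff = VoI_eq_0_iff_AE_Astar[OF assms(6) \<open>compact A\<close>]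
  have "VoI A M q p0 = 0 \<longleftrightarrow> (AE \<omega> in M. Astar A p0 \<subseteq> Astar A (q \<omega>))"
  proof
    assume "VoI A M q p0 = 0"
    then show "AE \<omega> in M. Astar A p0 \<subseteq> Astar A (q \<omega>)"
      using VoI_iff closed_Astar compact_imp_closed[OF \<open>compact A\<close>] by (intro AE_subset_closed) auto
  qed (use a0 VoI_iff in \<open>auto elim: AE_mp\<close>)
  moreover have "(AE \<omega> in M. q \<omega> \<in> Deltac A p0) \<longleftrightarrow> (AE \<omega> in M. Astar A p0 \<subseteq> Astar A (q \<omega>))"
    using assms(6) mem_Deltac_iff by (intro AE_cong) (auto simp: info_structure_def)
  ultimately show ?thesis
    using a0 VoI_iff by blast
qed

end
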